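(* If $\mathcal C_1$ and $\mathcal C_2$ are row-bounded classes of matrices, then the classes $\mathcal C_1\cup\mathcal C_2$ and $\mathcal C_1\cap\mathcal C_2$ are row-bounded as well.
   Context: All matrices are binary; rows numbered top to bottom, columns left to right; $(i,j)$ is the entry in row $i$, column $j$; $(a,b]=\{a+1,\dots,b\}$. A pattern $P\in\{0,1\}^{k\times\ell}$ is an interval minor of $M\in\{0,1\}^{m\times n}$ if there are integers $0=r_0<\dots<r_k=m$ and $0=c_0<\dots<c_\ell=n$ such that for each 1-entry $(i,j)$ of $P$ the submatrix of $M$ on rows $(r_{i-1},r_i]$ and columns $(c_{j-1},c_j]$ contains a 1-entry. A class of matrices is a set $\mathcal C$ of binary matrices closed under interval minors (if $M\in\mathcal C$ and $P$ is an interval minor of $M$ then $P\in\mathcal C$). $M\in\mathcal C$ is critical for $\mathcal C$ if changing any single 0-entry of $M$ into a 1-entry yields a matrix not in $\mathcal C$. A horizontal 0-run is a maximal set of consecutive 0-entries within one row; the complexity of a row is the number of such runs. The row-complexity of $\mathcal C$ is the supremum over all matrices critical for $\mathcal C$ of the maximum complexity of one of their rows; $\mathcal C$ is row-bounded if it is finite. *)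

theory Defs
  imports Main
begin

text \<open>A binary matrix is a triple (m, n, A): m rows, n columns, entries A i j for
  1 \<le> i \<le> m, 1 \<le> j \<le> n (True = 1-entry, False = 0-entry).
  Well-formed matrices have m, n \<ge> 1 and all entries outside the range equal to False,
  so that a matrix is uniquely represented.\<close>

type_synonym bmatrix = "nat \<times> nat \<times> (nat \<Rightarrow> nat \<Rightarrow> bool)"

definition nrows :: "bmatrix \<Rightarrow> nat" where "nrows M = fst M"
definition ncols :: "bmatrix \<Rightarrow> nat" where "ncols M = fst (snd M)"
definition entry :: "bmatrix \<Rightarrow> nat \<Rightarrow> nat \<Rightarrow> bool" where "entry M = snd (snd M)"

definition wf_matrix :: "bmatrix \<Rightarrow> bool" where
  "wf_matrix M \<longleftrightarrow> nrows M \<ge> 1 \<and> ncols M \<ge> 1 \<and>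
     (\<forall>i j. entry M i j \<longrightarrow> (1 \<le> i \<and> i \<le> nrows M \<and> 1 \<le> j \<and> j \<le> ncols M))"

definition interval_minor :: "bmatrix \<Rightarrow> bmatrix \<Rightarrow> bool" where
  "interval_minor P M \<longleftrightarrow>
     (\<exists>r c :: nat \<Rightarrow> nat.
        r 0 = 0 \<and> r (nrows P) = nrows M \<and> (\<forall>i < nrows P. r i < r (Suc i)) \<and>
        c 0 = 0 \<and> c (ncols P) = ncols M \<and> (\<forall>j < ncols P. c j < c (Suc j)) \<and>
        (\<forall>i j. 1 \<le> i \<and> i \<le> nrows P \<and> 1 \<le> j \<and> j \<le> ncols P \<and> entry P i j \<longrightarrow>
           (\<exists>i' j'. r (i - 1) < i' \<and> i' \<le> r i \<and> c (j - 1) < j' \<and> j' \<le> c j \<and> entry M i' j')))"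

definition matrix_class :: "bmatrix set \<Rightarrow> bool" where
  "matrix_class C \<longleftrightarrow> (\<forall>M\<in>C. wf_matrix M) \<and>
     (\<forall>M\<in>C. \<forall>P. wf_matrix P \<and> interval_minor P M \<longrightarrow> P \<in> C)"

definition set_one :: "bmatrix \<Rightarrow> nat \<Rightarrow> nat \<Rightarrow> bmatrix" where
  "set_one M i j = (nrows M, ncols M, (entry M)(i := (entry M i)(j := True)))"

definition critical :: "bmatrix set \<Rightarrow> bmatrix \<Rightarrow> bool" where
  "critical C M \<longleftrightarrow> M \<in> C \<and>
     (\<forall>i j. 1 \<le> i \<and> i \<le> nrows M \<and> 1 \<le> j \<and> j \<le> ncols M \<and> \<not> entry M i j
            \<longrightarrow> set_one M i j \<notin> C)"

definition zero_runs :: "bmatrix \<Rightarrow> nat \<Rightarrow> (nat \<times> nat) set" where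
  "zero_runs M i = {(a, b). 1 \<le> a \<and> a \<le> b \<and> b \<le> ncols M \<and>
       (\<forall>j. a \<le> j \<and> j \<le> b \<longrightarrow> \<not> entry M i j) \<and>
       (a = 1 \<or> entry M i (a - 1)) \<and> (b = ncols M \<or> entry M i (b + 1))}"

definition row_complexity :: "bmatrix \<Rightarrow> nat \<Rightarrow> nat" where
  "row_complexity M i = card (zero_runs M i)"

text \<open>Row-bounded: the supremum over critical matrices of the maximum row complexity is finite,
  i.e. there is a uniform bound.\<close>

definition row_bounded :: "bmatrix set \<Rightarrow> bool" where
  "row_bounded C \<longleftrightarrow> (\<exists>B::nat. \<forall>M. critical C M \<longrightarrow>
      (\<forall>i. 1 \<le> i \<and> i \<le> nrows M \<longrightarrow> row_complexity M i \<le> B))"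

end

theory Submission
  imports Defs
begin

text \<open>The union is easy: a matrix critical for \<open>C\<^sub>1 \<union> C\<^sub>2\<close> is critical for whichever class
  contains it. For the intersection, extend a matrix \<open>M\<close> critical for \<open>C\<^sub>1 \<inter> C\<^sub>2\<close> by adding
  1-entries to matrices \<open>N\<^sub>1\<close>, \<open>N\<^sub>2\<close> critical for \<open>C\<^sub>1\<close> and \<open>C\<^sub>2\<close>. Every 0-entry of \<open>M\<close>
  remains a 0-entry in \<open>N\<^sub>1\<close> or in \<open>N\<^sub>2\<close>, since otherwise turning it into a 1 would keep \<open>M\<close>
  in both classes. Hence each 0-run of a row of \<open>M\<close> starts where a 0-run of \<open>N\<^sub>1\<close> or of
  \<open>N\<^sub>2\<close> starts, and row complexities add up.\<close>

lemma set_one_simps [simp]: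
  "nrows (set_one M i j) = nrows M"
  "ncols (set_one M i j) = ncols M"
  "entry (set_one M i j) = (entry M)(i := (entry M i)(j := True))"
  by (simp_all add: set_one_def nrows_def ncols_def entry_def)

lemma wf_matrix_set_one:
  assumes "wf_matrix M" "1 \<le> i" "i \<le> nrows M" "1 \<le> j" "j \<le> ncols M"
  shows "wf_matrix (set_one M i j)"
  using assms unfolding wf_matrix_def by auto

definition entrywise_le :: "bmatrix \<Rightarrow> bmatrix \<Rightarrow> bool" where
  "entrywise_le P N \<longleftrightarrow> nrows P = nrows N \<and> ncols P = ncols N \<and>
     (\<forall>i j. entry P i j \<longrightarrow> entry N i j)"

lemma interval_minor_if_entrywise_le:
  assumes "entrywise_le P N"
  shows "interval_minor P N"
  unfolding interval_minor_def
  by (rule exI[of _ id], rule exI[of _ id]) (use assms in \<open>fastforce simp: entrywise_le_def\<close>)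

lemma matrix_class_entrywise_le_closed:
  assumes "matrix_class C" "N \<in> C" "wf_matrix P" "entrywise_le P N"
  shows "P \<in> C"
  using assms interval_minor_if_entrywise_le unfolding matrix_class_def by blast

definition ones :: "bmatrix \<Rightarrow> (nat \<times> nat) set" where
  "ones N = {(i, j). entry N i j}"

lemma ones_subset_range: "wf_matrix N \<Longrightarrow> ones N \<subseteq> {1..nrows N} \<times> {1..ncols N}"
  unfolding ones_def wf_matrix_def by auto

lemma card_ones_le: "wf_matrix N \<Longrightarrow> card (ones N) \<le> nrows N * ncols N"
  using card_mono[OF _ ones_subset_range] by (fastforce simp: card_cartesian_product)

lemma ones_set_one: "ones (set_one N i j) = insert (i, j) (ones N)"
  unfolding ones_def by (auto split: if_splits)

text \<open>A matrix of the class with the largest number of 1-entries above \<open>M\<close> is critical.\<close>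

lemma critical_extension:
  assumes C: "matrix_class C" and M: "M \<in> C"
  obtains N where "critical C N" "entrywise_le M N"
proof -
  define above where "above N \<longleftrightarrow> N \<in> C \<and> entrywise_le M N" for N
  have wf: "wf_matrix N" if "N \<in> C" for N
    using C that unfolding matrix_class_def by blast
  have "above M"
    using M unfolding above_def entrywise_le_def by simp
  moreover have "card (ones N) < nrows M * ncols M + 1" if "above N" for N
    using that card_ones_le[OF wf, of N] unfolding above_def entrywise_le_def by simp
  ultimately obtain N where "above N" and N_max: "\<And>N'. above N' \<Longrightarrow> card (ones N') \<le> card (ones N)"
    using ex_has_greatest_nat[of above M "\<lambda>N. card (ones N)"] by blast
  then have N: "N \<in> C" "entrywise_le M N"
    unfolding above_def by auto
  have "set_one N i j \<notin> C" if "\<not> entry N i j" for i j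
  proof
    assume "set_one N i j \<in> C"
    then have "card (insert (i, j) (ones N)) \<le> card (ones N)"
      using N N_max[of "set_one N i j"]
      unfolding above_def entrywise_le_def ones_set_one by auto
    moreover have "finite (ones N)"
      using ones_subset_range[OF wf[OF N(1)]] finite_subset by blast
    ultimately show False
      using that by (simp add: ones_def)
  qed
  then have "critical C N"
    using N(1) unfolding critical_def by blast
  then show thesis
    using N(2) by (rule that)
qed

definition zero_run_starts :: "bmatrix \<Rightarrow> nat \<Rightarrow> nat set" where
  "zero_run_starts M i =
     {a. 1 \<le> a \<and> a \<le> ncols M \<and> \<not> entry M i a \<and> (a = 1 \<or> entry M i (a - 1))}"

lemma finite_zero_run_starts: "finite (zero_run_starts M i)"
  unfolding zero_run_starts_def by (rule finite_subset[of _ "{..ncols M}"]) auto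

lemma zero_run_end_unique:
  assumes "(a, b) \<in> zero_runs M i" "(a, b') \<in> zero_runs M i"
  shows "b = b'"
proof -
  have "\<not> b < b'" if "(a, b) \<in> zero_runs M i" "(a, b') \<in> zero_runs M i" for b b'
  proof
    assume "b < b'"
    then have "\<not> entry M i (b + 1)" and "b \<noteq> ncols M"
      using that unfolding zero_runs_def by auto
    then show False
      using that(1) unfolding zero_runs_def by auto
  qed
  then show ?thesis
    using assms by (meson linorder_neqE_nat)
qed

lemma inj_on_fst_zero_runs: "inj_on fst (zero_runs M i)"
  unfolding inj_on_def by (auto intro: zero_run_end_unique)

lemma zero_run_start_extends:
  assumes a: "a \<in> zero_run_starts M i"
  shows "\<exists>b. (a, b) \<in> zero_runs M i"
proof -
  define S where
    "S = {b. a \<le> b \<and> b \<le> ncols M \<and> (\<forall>j. a \<le> j \<and> j \<le> b \<longrightarrow> \<not> entry M i j)}"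
  have "finite S"
    unfolding S_def by (rule finite_subset[of _ "{..ncols M}"]) auto
  moreover have "a \<in> S"
    using a unfolding S_def zero_run_starts_def by auto
  ultimately obtain b where b: "b \<in> S" and b_max: "\<And>x. x \<in> S \<Longrightarrow> x \<le> b"
    using Max_in Max_ge by blast
  have "b = ncols M \<or> entry M i (b + 1)"
  proof (rule ccontr)
    assume "\<not> (b = ncols M \<or> entry M i (b + 1))"
    then have "b + 1 \<in> S"
      using b unfolding S_def by (auto simp: le_Suc_eq)
    then show False
      using b_max by fastforce
  qed
  then have "(a, b) \<in> zero_runs M i"
    using a b unfolding zero_runs_def zero_run_starts_def S_def by auto
  then show ?thesis ..
qed

lemma fst_zero_runs: "fst ` zero_runs M i = zero_run_starts M i"
proof
  show "fst ` zero_runs M i \<subseteq> zero_run_starts M i"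
    unfolding zero_runs_def zero_run_starts_def by auto
  show "zero_run_starts M i \<subseteq> fst ` zero_runs M i"
  proof
    fix a
    assume "a \<in> zero_run_starts M i"
    then obtain b where "(a, b) \<in> zero_runs M i"
      using zero_run_start_extends by blast
    then show "a \<in> fst ` zero_runs M i"
      by (metis fst_conv image_eqI)
  qed
qed

lemma row_complexity_eq_card_zero_run_starts:
  "row_complexity M i = card (zero_run_starts M i)"
  unfolding row_complexity_def
  using card_image[OF inj_on_fst_zero_runs] by (simp add: fst_zero_runs)

lemma row_complexity_le_add:
  assumes "entrywise_le M N\<^sub>1" "entrywise_le M N\<^sub>2"
    and zero: "\<And>j. 1 \<le> j \<Longrightarrow> j \<le> ncols M \<Longrightarrow> \<not> entry M i j \<Longrightarrow>
                    \<not> (entry N\<^sub>1 i j \<and> entry N\<^sub>2 i j)"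
  shows "row_complexity M i \<le> row_complexity N\<^sub>1 i + row_complexity N\<^sub>2 i"
proof -
  have "zero_run_starts M i \<subseteq> zero_run_starts N\<^sub>1 i \<union> zero_run_starts N\<^sub>2 i"
    using assms unfolding zero_run_starts_def entrywise_le_def by auto
  then have "card (zero_run_starts M i) \<le> card (zero_run_starts N\<^sub>1 i \<union> zero_run_starts N\<^sub>2 i)"
    by (simp add: card_mono finite_zero_run_starts)
  also have "\<dots> \<le> card (zero_run_starts N\<^sub>1 i) + card (zero_run_starts N\<^sub>2 i)"
    by (rule card_Un_le)
  finally show ?thesis
    by (simp add: row_complexity_eq_card_zero_run_starts)
qed

lemma critical_Un_cases:
  "critical (C\<^sub>1 \<union> C\<^sub>2) M \<Longrightarrow> critical C\<^sub>1 M \<or> critical C\<^sub>2 M"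
  unfolding critical_def by blast

lemma row_bounded_Un:
  assumes "row_bounded C\<^sub>1" "row_bounded C\<^sub>2"
  shows "row_bounded (C\<^sub>1 \<union> C\<^sub>2)"
proof -
  obtain B\<^sub>1 B\<^sub>2 where
    "\<And>M i. critical C\<^sub>1 M \<Longrightarrow> 1 \<le> i \<Longrightarrow> i \<le> nrows M \<Longrightarrow> row_complexity M i \<le> B\<^sub>1"
    "\<And>M i. critical C\<^sub>2 M \<Longrightarrow> 1 \<le> i \<Longrightarrow> i \<le> nrows M \<Longrightarrow> row_complexity M i \<le> B\<^sub>2"
    using assms unfolding row_bounded_def by blast
  then have "row_complexity M i \<le> max B\<^sub>1 B\<^sub>2"
    if "critical (C\<^sub>1 \<union> C\<^sub>2) M" "1 \<le> i" "i \<le> nrows M" for M i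
    using that critical_Un_cases by (meson max.coboundedI1 max.coboundedI2)
  then show ?thesis
    unfolding row_bounded_def by blast
qed

lemma critical_Int_zero_entry:
  assumes "matrix_class C\<^sub>1" "matrix_class C\<^sub>2" "critical (C\<^sub>1 \<inter> C\<^sub>2) M"
    and "N\<^sub>1 \<in> C\<^sub>1" "entrywise_le M N\<^sub>1" "N\<^sub>2 \<in> C\<^sub>2" "entrywise_le M N\<^sub>2"
    and "1 \<le> i" "i \<le> nrows M" "1 \<le> j" "j \<le> ncols M" "\<not> entry M i j"
  shows "\<not> (entry N\<^sub>1 i j \<and> entry N\<^sub>2 i j)"
proof
  assume "entry N\<^sub>1 i j \<and> entry N\<^sub>2 i j"
  then have "entrywise_le (set_one M i j) N\<^sub>1" "entrywise_le (set_one M i j) N\<^sub>2"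
    using assms(5,7) unfolding entrywise_le_def by auto
  moreover have "wf_matrix (set_one M i j)"
  proof (rule wf_matrix_set_one)
    show "wf_matrix M"
      using assms(1,3) unfolding matrix_class_def critical_def by blast
  qed (use assms(8-11) in auto)
  ultimately have "set_one M i j \<in> C\<^sub>1 \<inter> C\<^sub>2"
    using assms(1,2,4,6) matrix_class_entrywise_le_closed by blast
  then show False
    using assms(3,8-12) unfolding critical_def by blast
qed

lemma row_bounded_Int:
  assumes "matrix_class C\<^sub>1" "matrix_class C\<^sub>2" "row_bounded C\<^sub>1" "row_bounded C\<^sub>2"
  shows "row_bounded (C\<^sub>1 \<inter> C\<^sub>2)"
proof -
  obtain B\<^sub>1 B\<^sub>2 where
    B\<^sub>1: "\<And>M i. critical C\<^sub>1 M \<Longrightarrow> 1 \<le> i \<Longrightarrow> i \<le> nrows M \<Longrightarrow> row_complexity M i \<le> B\<^sub>1" and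
    B\<^sub>2: "\<And>M i. critical C\<^sub>2 M \<Longrightarrow> 1 \<le> i \<Longrightarrow> i \<le> nrows M \<Longrightarrow> row_complexity M i \<le> B\<^sub>2"
    using assms(3,4) unfolding row_bounded_def by blast
  have "row_complexity M i \<le> B\<^sub>1 + B\<^sub>2"
    if M: "critical (C\<^sub>1 \<inter> C\<^sub>2) M" and i: "1 \<le> i" "i \<le> nrows M" for M i
  proof -
    have "M \<in> C\<^sub>1" "M \<in> C\<^sub>2"
      using M unfolding critical_def by auto
    obtain N\<^sub>1 where N\<^sub>1: "critical C\<^sub>1 N\<^sub>1" "entrywise_le M N\<^sub>1"
      using critical_extension[OF assms(1) \<open>M \<in> C\<^sub>1\<close>] .
    obtain N\<^sub>2 where N\<^sub>2: "critical C\<^sub>2 N\<^sub>2" "entrywise_le M N\<^sub>2"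
      using critical_extension[OF assms(2) \<open>M \<in> C\<^sub>2\<close>] .
    have "N\<^sub>1 \<in> C\<^sub>1" "N\<^sub>2 \<in> C\<^sub>2"
      using N\<^sub>1(1) N\<^sub>2(1) unfolding critical_def by auto
    note zero_entry = critical_Int_zero_entry[OF assms(1,2) M this(1) N\<^sub>1(2) this(2) N\<^sub>2(2) i]
    have "row_complexity M i \<le> row_complexity N\<^sub>1 i + row_complexity N\<^sub>2 i"
      by (rule row_complexity_le_add[OF N\<^sub>1(2) N\<^sub>2(2) zero_entry])
    also have "\<dots> \<le> B\<^sub>1 + B\<^sub>2"
      using B\<^sub>1[OF N\<^sub>1(1)] B\<^sub>2[OF N\<^sub>2(1)] i N\<^sub>1(2) N\<^sub>2(2)
      by (simp add: add_mono entrywise_le_def)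
    finally show ?thesis .
  qed
  then show ?thesis
    unfolding row_bounded_def by blast
qed

theorem proposition4p2:
  assumes "matrix_class C1" and "matrix_class C2"
    and "row_bounded C1" and "row_bounded C2"
  shows "row_bounded (C1 \<union> C2) \<and> row_bounded (C1 \<inter> C2)"
  using assms row_bounded_Un row_bounded_Int by blast

end
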